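(* Let $\mathcal{A}\in\mathbb{R}^{l\times m\times n}$, and let $U_0\in\mathbb{R}^{l\times r_1}$, $V_0\in\mathbb{R}^{m\times r_2}$, $W_0\in\mathbb{R}^{n\times r_3}$ have orthonormal columns. Suppose blocks $U_1,\dots,U_\lambda$ (mode 1), $V_1,\dots,V_\mu$ (mode 2), $W_1,\dots,W_\nu$ (mode 3) have been generated by mode-1, mode-2 and mode-3 block-Krylov steps (as described in the context), where the blocks with subscript $1$ are generated from $U_0,V_0,W_0$ (i.e. $U_1$ is generated with $\bar V=V_0$, $\bar W=W_0$, and analogously for $V_1$ and $W_1$). Then \[ \mathcal{A}\cdot(U_j,V_0,W_0)=\begin{cases}\mathcal{H}^1_0:=\mathcal{A}\cdot(U_0,V_0,W_0), & j=0,\\ \mathcal{H}^1_1:=\mathcal{A}\cdot(U_1,V_0,W_0), & j=1,\\ 0, & 2\le j\le \lambda,\end{cases} \] and the corresponding identities hold for modes 2 and 3, i.e. $\mathcal{A}\cdot(U_0,V_j,W_0)=0$ for $2\le j\le\mu$ and $\mathcal{A}\cdot(U_0,V_0,W_j)=0$ for $2\le j\le\nu$.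
   Context: For a tensor $\mathcal{A}\in\mathbb{R}^{l\times m\times n}$ and matrices $U\in\mathbb{R}^{l\times p}$, $V\in\mathbb{R}^{m\times q}$, $W\in\mathbb{R}^{n\times r}$, write $\mathcal{A}\cdot(U,V,W)\in\mathbb{R}^{p\times q\times r}$ for the tensor with entries $\sum_{\alpha,\beta,\gamma}u_{\alpha i}v_{\beta j}w_{\gamma k}a_{\alpha\beta\gamma}$; $\mathcal{A}\cdot_{2,3}(V,W)\in\mathbb{R}^{l\times q\times r}$ denotes multiplication (by transposes) in modes 2 and 3 only, and similarly for other modes. $\mathtt{unfold}_1(\mathcal{X})$ is the matrix whose columns are the mode-1 fibers of $\mathcal{X}$. A mode-1 block-Krylov step, given previously computed orthonormal blocks $\widehat U_{\lambda-1}=[U_0\,U_1\cdots U_{\lambda-1}]$ (all columns together orthonormal) and matrices $\bar V$, $\bar W$ whose columns are selected from already computed mode-2 and mode-3 blocks, computes $\mathcal{U}=\mathcal{A}\cdot_{2,3}(\bar V,\bar W)$, $\widetilde{\mathcal{U}}=\mathcal{U}-\widehat U_{\lambda-1}\cdot_1(\widehat U_{\lambda-1}^T\cdot_1\mathcal{U})$ (i.e. $\mathtt{unfold}_1(\widetilde{\mathcal U})=(I-\widehat U_{\lambda-1}\widehat U_{\lambda-1}^T)\mathtt{unfold}_1(\mathcal U)$), and a thin QR decomposition $\mathtt{unfold}_1(\widetilde{\mathcal{U}})=U_\lambda H_\lambda$, where $U_\lambda$ has orthonormal columns orthogonal to those of $\widehat U_{\lambda-1}$. Mode-2 and mode-3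 steps are defined analogously. *)

theory Defs
  imports Complex_Main
begin

text \<open>A tensor in R^(l x m x n) is a function nat => nat => nat => real,
  only entries with indices below l, m, n are relevant. A matrix in R^(a x b) is a
  function nat => nat => real (row, column), only entries below a, b relevant.
  A family of blocks U_0, U_1, ... is a function nat => (nat => nat => real) together
  with the column counts nat => nat.\<close>

type_synonym tensor3 = "nat \<Rightarrow> nat \<Rightarrow> nat \<Rightarrow> real"
type_synonym mat = "nat \<Rightarrow> nat \<Rightarrow> real"

definition ttm :: "tensor3 \<Rightarrow> nat \<Rightarrow> nat \<Rightarrow> nat \<Rightarrow> mat \<Rightarrow> mat \<Rightarrow> mat \<Rightarrow> tensor3" where
  "ttm A l m n U V W = (\<lambda>i j k. \<Sum>\<alpha><l. \<Sum>\<beta><m. \<Sum>\<gamma><n.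
      U \<alpha> i * V \<beta> j * W \<gamma> k * A \<alpha> \<beta> \<gamma>)"

definition mode23 :: "tensor3 \<Rightarrow> nat \<Rightarrow> nat \<Rightarrow> mat \<Rightarrow> mat \<Rightarrow> tensor3" where
  "mode23 A m n V W = (\<lambda>\<alpha> j k. \<Sum>\<beta><m. \<Sum>\<gamma><n. V \<beta> j * W \<gamma> k * A \<alpha> \<beta> \<gamma>)"

definition mode13 :: "tensor3 \<Rightarrow> nat \<Rightarrow> nat \<Rightarrow> mat \<Rightarrow> mat \<Rightarrow> tensor3" where
  "mode13 A l n U W = (\<lambda>i \<beta> k. \<Sum>\<alpha><l. \<Sum>\<gamma><n. U \<alpha> i * W \<gamma> k * A \<alpha> \<beta> \<gamma>)"

definition mode12 :: "tensor3 \<Rightarrow> nat \<Rightarrow> nat \<Rightarrow> mat \<Rightarrow> mat \<Rightarrow> tensor3" where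
  "mode12 A l m U V = (\<lambda>i j \<gamma>. \<Sum>\<alpha><l. \<Sum>\<beta><m. U \<alpha> i * V \<beta> j * A \<alpha> \<beta> \<gamma>)"

text \<open>Unfoldings: the columns of unfold_k(X) are the mode-k fibers of X.
  For X of size d1 x d2 x d3: unfold1 is d1 x (d2*d3), unfold2 is d2 x (d1*d3),
  unfold3 is d3 x (d1*d2) (column c encodes the remaining two indices).\<close>
definition unfold1 :: "nat \<Rightarrow> tensor3 \<Rightarrow> mat" where
  "unfold1 d2 X = (\<lambda>a c. X a (c mod d2) (c div d2))"

definition unfold2 :: "nat \<Rightarrow> tensor3 \<Rightarrow> mat" where
  "unfold2 d1 X = (\<lambda>b c. X (c mod d1) b (c div d1))"

definition unfold3 :: "nat \<Rightarrow> tensor3 \<Rightarrow> mat" where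
  "unfold3 d1 X = (\<lambda>g c. X (c mod d1) (c div d1) g)"

definition orthonormal_cols :: "nat \<Rightarrow> nat \<Rightarrow> mat \<Rightarrow> bool" where
  "orthonormal_cols d p U \<longleftrightarrow>
     (\<forall>i<p. \<forall>j<p. (\<Sum>a<d. U a i * U a j) = (if i = j then 1 else 0))"

text \<open>Generic orthogonalisation + thin QR step: given blocks Ub 0 .. Ub (k-1)
  (d rows, pb i columns each), and a d x nc matrix X, the block Ub k is obtained by
  (I - Uhat Uhat^T) X = Ub k * H with Ub k having orthonormal columns orthogonal
  to all columns of Ub 0 .. Ub (k-1) and H upper triangular (pb k x nc).\<close>
definition qr_step :: "nat \<Rightarrow> (nat \<Rightarrow> mat) \<Rightarrow> (nat \<Rightarrow> nat) \<Rightarrow> nat \<Rightarrow> mat \<Rightarrow> nat \<Rightarrow> bool" where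
  "qr_step d Ub pb k X nc \<longleftrightarrow>
     orthonormal_cols d (pb k) (Ub k) \<and>
     (\<forall>i<k. \<forall>s<pb i. \<forall>t<pb k. (\<Sum>a<d. Ub i a s * Ub k a t) = 0) \<and>
     (\<exists>H :: mat. (\<forall>t<pb k. \<forall>c<nc. c < t \<longrightarrow> H t c = 0) \<and>
        (\<forall>a<d. \<forall>c<nc.
           X a c - (\<Sum>i<k. \<Sum>s<pb i. Ub i a s * (\<Sum>a'<d. Ub i a' s * X a' c))
           = (\<Sum>t<pb k. Ub k a t * H t c)))"

definition krylov_step1 :: "tensor3 \<Rightarrow> nat \<Rightarrow> nat \<Rightarrow> nat \<Rightarrow> (nat \<Rightarrow> mat) \<Rightarrow> (nat \<Rightarrow> nat)
    \<Rightarrow> nat \<Rightarrow> mat \<Rightarrow> nat \<Rightarrow> mat \<Rightarrow> nat \<Rightarrow> bool" where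
  "krylov_step1 A l m n U pU k Vb q Wb r \<longleftrightarrow>
     qr_step l U pU k (unfold1 q (mode23 A m n Vb Wb)) (q * r)"

definition krylov_step2 :: "tensor3 \<Rightarrow> nat \<Rightarrow> nat \<Rightarrow> nat \<Rightarrow> (nat \<Rightarrow> mat) \<Rightarrow> (nat \<Rightarrow> nat)
    \<Rightarrow> nat \<Rightarrow> mat \<Rightarrow> nat \<Rightarrow> mat \<Rightarrow> nat \<Rightarrow> bool" where
  "krylov_step2 A l m n V pV k Ub p Wb r \<longleftrightarrow>
     qr_step m V pV k (unfold2 p (mode13 A l n Ub Wb)) (p * r)"

definition krylov_step3 :: "tensor3 \<Rightarrow> nat \<Rightarrow> nat \<Rightarrow> nat \<Rightarrow> (nat \<Rightarrow> mat) \<Rightarrow> (nat \<Rightarrow> nat)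
    \<Rightarrow> nat \<Rightarrow> mat \<Rightarrow> nat \<Rightarrow> mat \<Rightarrow> nat \<Rightarrow> bool" where
  "krylov_step3 A l m n W pW k Ub p Vb q \<longleftrightarrow>
     qr_step n W pW k (unfold3 p (mode12 A l m Ub Vb)) (p * q)"

text \<open>The d x q matrix Xb has its columns selected from already computed blocks
  B 0 .. B kmax: every column of Xb is some column of some block B i with
  i <= kmax whose generation time tB i is strictly less than t.\<close>
definition cols_selected :: "nat \<Rightarrow> mat \<Rightarrow> nat \<Rightarrow> (nat \<Rightarrow> mat) \<Rightarrow> (nat \<Rightarrow> nat) \<Rightarrow> nat
    \<Rightarrow> (nat \<Rightarrow> nat) \<Rightarrow> nat \<Rightarrow> bool" where
  "cols_selected d Xb q B pB kmax tB t \<longleftrightarrow>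
     (\<forall>j<q. \<exists>i\<le>kmax. tB i < t \<and> (\<exists>s<pB i. \<forall>a<d. Xb a j = B i a s))"

end

theory Submission
  imports Defs
begin

text \<open>By the QR step that produced \<open>U\<^sub>1\<close>, every column of
  \<open>unfold\<^sub>1(A \<cdot>\<^sub>2\<^sub>,\<^sub>3 (V\<^sub>0, W\<^sub>0))\<close> lies in the span of the columns of \<open>U\<^sub>0\<close> and \<open>U\<^sub>1\<close>.
  A later block \<open>U\<^sub>j\<close> is orthogonal to both, so \<open>U\<^sub>j\<^sup>T\<close> annihilates that unfolding, which is
  the mode-1 unfolding of \<open>A \<cdot> (U\<^sub>j, V\<^sub>0, W\<^sub>0)\<close>. Modes 2 and 3 reduce to mode 1 by permuting
  the modes of the tensor.\<close>

lemma qr_step_orthogonal: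
  assumes "qr_step d Ub pb k X nc" "i < k" "s < pb i" "t < pb k"
  shows "(\<Sum>a<d. Ub i a s * Ub k a t) = 0"
  using assms unfolding qr_step_def by blast

lemma sum_mult_combination_orthogonal:
  fixes u :: "nat \<Rightarrow> real"
  assumes "\<And>s. s < p \<Longrightarrow> (\<Sum>a<d. B a s * u a) = 0"
  shows "(\<Sum>a<d. u a * (\<Sum>s<p. B a s * x s)) = 0"
proof -
  have "(\<Sum>a<d. u a * (\<Sum>s<p. B a s * x s)) = (\<Sum>s<p. (\<Sum>a<d. B a s * u a) * x s)"
    by (simp add: sum_distrib_left sum_distrib_right mult_ac sum.swap[of _ "{..<p}"])
  also have "\<dots> = 0"
    using assms by simp
  finally show ?thesis .
qed

lemma qr_step_input_orthogonal:
  fixes u :: "nat \<Rightarrow> real"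
  assumes qr: "qr_step d Ub pb k X nc"
    and orth: "\<And>i s. i \<le> k \<Longrightarrow> s < pb i \<Longrightarrow> (\<Sum>a<d. Ub i a s * u a) = 0"
    and c: "c < nc"
  shows "(\<Sum>a<d. u a * X a c) = 0"
proof -
  from qr obtain H where H: "\<forall>a<d. \<forall>c<nc.
      X a c - (\<Sum>i<k. \<Sum>s<pb i. Ub i a s * (\<Sum>a'<d. Ub i a' s * X a' c))
      = (\<Sum>t<pb k. Ub k a t * H t c)"
    unfolding qr_step_def by blast
  define coef where "coef i s = (\<Sum>a'<d. Ub i a' s * X a' c)" for i s
  have X_decomp: "X a c = (\<Sum>i<k. \<Sum>s<pb i. Ub i a s * coef i s) + (\<Sum>t<pb k. Ub k a t * H t c)"
    if "a < d" for a
    using H that c unfolding coef_def by (simp add: algebra_simps)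
  have "(\<Sum>a<d. u a * X a c)
      = (\<Sum>i<k. \<Sum>a<d. u a * (\<Sum>s<pb i. Ub i a s * coef i s))
        + (\<Sum>a<d. u a * (\<Sum>t<pb k. Ub k a t * H t c))"
    by (simp add: X_decomp distrib_left sum.distrib sum_distrib_left sum.swap[of _ "{..<k}"])
  also have "\<dots> = 0"
    using orth by (simp add: sum_mult_combination_orthogonal)
  finally show ?thesis .
qed

lemma index_pair_less_mult:
  fixes b c q r :: nat
  assumes "b < q" "c < r"
  shows "b + c * q < q * r"
proof -
  have "b + c * q < Suc c * q"
    using \<open>b < q\<close> by simp
  also have "\<dots> \<le> r * q"
    using \<open>c < r\<close> by (intro mult_right_mono) auto
  finally show ?thesis
    by (simp add: mult.commute)
qed

lemma ttm_eq_unfold1_contraction: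
  assumes "b < q"
  shows "ttm A l m n U V W a b c = (\<Sum>\<alpha><l. U \<alpha> a * unfold1 q (mode23 A m n V W) \<alpha> (b + c * q))"
  using assms unfolding ttm_def unfold1_def mode23_def
  by (simp add: sum_distrib_left algebra_simps)

lemma krylov_step1_later_block_ttm_zero:
  assumes U1: "krylov_step1 A l m n U pU 1 V0 q W0 r"
    and Uj: "krylov_step1 A l m n U pU j Vb q' Wb r'" and j: "1 < j"
    and a: "a < pU j" and b: "b < q" and c: "c < r"
  shows "ttm A l m n (U j) V0 W0 a b c = 0"
proof -
  have "(\<Sum>\<alpha><l. U j \<alpha> a * unfold1 q (mode23 A m n V0 W0) \<alpha> (b + c * q)) = 0"
  proof (rule qr_step_input_orthogonal)
    show "qr_step l U pU 1 (unfold1 q (mode23 A m n V0 W0)) (q * r)"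
      using U1 unfolding krylov_step1_def .
    show "(\<Sum>\<alpha><l. U i \<alpha> s * U j \<alpha> a) = 0" if "i \<le> 1" "s < pU i" for i s
      using qr_step_orthogonal[OF Uj[unfolded krylov_step1_def] _ that(2) a] that(1) j by simp
    show "b + c * q < q * r"
      using b c by (rule index_pair_less_mult)
  qed
  then show ?thesis
    using b by (simp add: ttm_eq_unfold1_contraction)
qed

definition swap_modes12 :: "tensor3 \<Rightarrow> tensor3" where
  "swap_modes12 A = (\<lambda>\<beta> \<alpha> \<gamma>. A \<alpha> \<beta> \<gamma>)"

definition mode3_to_front :: "tensor3 \<Rightarrow> tensor3" where
  "mode3_to_front A = (\<lambda>\<gamma> \<alpha> \<beta>. A \<alpha> \<beta> \<gamma>)"

lemma krylov_step2_eq_swap_modes12: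
  "krylov_step2 A l m n V pV k Ub p Wb r = krylov_step1 (swap_modes12 A) m l n V pV k Ub p Wb r"
  unfolding krylov_step1_def krylov_step2_def unfold1_def unfold2_def mode23_def mode13_def
    swap_modes12_def ..

lemma krylov_step3_eq_mode3_to_front:
  "krylov_step3 A l m n W pW k Ub p Vb q = krylov_step1 (mode3_to_front A) n l m W pW k Ub p Vb q"
  unfolding krylov_step1_def krylov_step3_def unfold1_def unfold3_def mode23_def mode12_def
    mode3_to_front_def ..

lemma ttm_swap_modes12:
  "ttm A l m n U V W a b c = ttm (swap_modes12 A) m l n V U W b a c"
  unfolding ttm_def swap_modes12_def
  by (subst sum.swap) (simp add: mult_ac)

lemma ttm_mode3_to_front:
  "ttm A l m n U V W a b c = ttm (mode3_to_front A) n l m W U V c a b"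
  unfolding ttm_def mode3_to_front_def
  by (simp add: mult_ac sum.swap[of _ "{..<n}"])

theorem lemma4p1:
  fixes A :: tensor3 and l m n :: nat
    and U V W :: "nat \<Rightarrow> mat" and pU pV pW :: "nat \<Rightarrow> nat"
    and lam mu nu :: nat
    and tU tV tW :: "nat \<Rightarrow> nat"
  assumes U0: "orthonormal_cols l (pU 0) (U 0)"
    and V0: "orthonormal_cols m (pV 0) (V 0)"
    and W0: "orthonormal_cols n (pW 0) (W 0)"
    \<comment> \<open>generation times: the starting blocks at time 0, the Krylov blocks at
        distinct positive times, increasing with the block index in each mode\<close>
    and t0: "tU 0 = 0" "tV 0 = 0" "tW 0 = 0"
    and tpos: "\<forall>k. 1 \<le> k \<and> k \<le> lam \<longrightarrow> 0 < tU k"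
              "\<forall>k. 1 \<le> k \<and> k \<le> mu \<longrightarrow> 0 < tV k"
              "\<forall>k. 1 \<le> k \<and> k \<le> nu \<longrightarrow> 0 < tW k"
    and tmono: "\<forall>i j. i < j \<and> j \<le> lam \<longrightarrow> tU i < tU j"
               "\<forall>i j. i < j \<and> j \<le> mu \<longrightarrow> tV i < tV j"
               "\<forall>i j. i < j \<and> j \<le> nu \<longrightarrow> tW i < tW j"
    and tdist: "\<forall>i j. 1 \<le> i \<and> i \<le> lam \<and> 1 \<le> j \<and> j \<le> mu \<longrightarrow> tU i \<noteq> tV j"
               "\<forall>i j. 1 \<le> i \<and> i \<le> lam \<and> 1 \<le> j \<and> j \<le> nu \<longrightarrow> tU i \<noteq> tW j"
               "\<forall>i j. 1 \<le> i \<and> i \<le> mu \<and> 1 \<le> j \<and> j \<le> nu \<longrightarrow> tV i \<noteq> tW j"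
    \<comment> \<open>the blocks with subscript 1 are generated from U_0, V_0, W_0\<close>
    and U1: "1 \<le> lam \<Longrightarrow> krylov_step1 A l m n U pU 1 (V 0) (pV 0) (W 0) (pW 0)"
    and V1: "1 \<le> mu \<Longrightarrow> krylov_step2 A l m n V pV 1 (U 0) (pU 0) (W 0) (pW 0)"
    and W1: "1 \<le> nu \<Longrightarrow> krylov_step3 A l m n W pW 1 (U 0) (pU 0) (V 0) (pV 0)"
    \<comment> \<open>the remaining blocks are generated by block-Krylov steps from already computed blocks\<close>
    and Uk: "\<And>k. 2 \<le> k \<Longrightarrow> k \<le> lam \<Longrightarrow> \<exists>Vb q Wb r.
               cols_selected m Vb q V pV mu tV (tU k) \<and>
               cols_selected n Wb r W pW nu tW (tU k) \<and>
               krylov_step1 A l m n U pU k Vb q Wb r"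
    and Vk: "\<And>k. 2 \<le> k \<Longrightarrow> k \<le> mu \<Longrightarrow> \<exists>Ub p Wb r.
               cols_selected l Ub p U pU lam tU (tV k) \<and>
               cols_selected n Wb r W pW nu tW (tV k) \<and>
               krylov_step2 A l m n V pV k Ub p Wb r"
    and Wk: "\<And>k. 2 \<le> k \<Longrightarrow> k \<le> nu \<Longrightarrow> \<exists>Ub p Vb q.
               cols_selected l Ub p U pU lam tU (tW k) \<and>
               cols_selected m Vb q V pV mu tV (tW k) \<and>
               krylov_step3 A l m n W pW k Ub p Vb q"
  shows "(\<forall>j. 2 \<le> j \<and> j \<le> lam \<longrightarrow>
            (\<forall>a<pU j. \<forall>b<pV 0. \<forall>c<pW 0. ttm A l m n (U j) (V 0) (W 0) a b c = 0)) \<and>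
         (\<forall>j. 2 \<le> j \<and> j \<le> mu \<longrightarrow>
            (\<forall>a<pU 0. \<forall>b<pV j. \<forall>c<pW 0. ttm A l m n (U 0) (V j) (W 0) a b c = 0)) \<and>
         (\<forall>j. 2 \<le> j \<and> j \<le> nu \<longrightarrow>
            (\<forall>a<pU 0. \<forall>b<pV 0. \<forall>c<pW j. ttm A l m n (U 0) (V 0) (W j) a b c = 0))"
proof (intro conjI allI impI ballI)
  fix j a b c
  assume j: "2 \<le> j \<and> j \<le> lam" and abc: "a < pU j" "b < pV 0" "c < pW 0"
  then obtain Vb q Wb r where "krylov_step1 A l m n U pU j Vb q Wb r"
    using Uk by blast
  with U1 j abc show "ttm A l m n (U j) (V 0) (W 0) a b c = 0"
    by (intro krylov_step1_later_block_ttm_zero) auto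
next
  fix j a b c
  assume j: "2 \<le> j \<and> j \<le> mu" and abc: "a < pU 0" "b < pV j" "c < pW 0"
  then obtain Ub p Wb r where "krylov_step2 A l m n V pV j Ub p Wb r"
    using Vk by blast
  with V1 j abc show "ttm A l m n (U 0) (V j) (W 0) a b c = 0"
    unfolding ttm_swap_modes12[of A] krylov_step2_eq_swap_modes12
    by (intro krylov_step1_later_block_ttm_zero) auto
next
  fix j a b c
  assume j: "2 \<le> j \<and> j \<le> nu" and abc: "a < pU 0" "b < pV 0" "c < pW j"
  then obtain Ub p Vb q where "krylov_step3 A l m n W pW j Ub p Vb q"
    using Wk by blast
  with W1 j abc show "ttm A l m n (U 0) (V 0) (W j) a b c = 0"
    unfolding ttm_mode3_to_front[of A] krylov_step3_eq_mode3_to_front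
    by (intro krylov_step1_later_block_ttm_zero) auto
qed

end
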